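(* Let $X$ be a strictly convex curve in $\mathbb{R}^2$ satisfying Condition (C): for every point $P$ on $X$ and every chord $AB$ of $X$ parallel to the tangent line of $X$ at $P$, the area of the region bounded by $X$ and $AB$ equals $\frac43$ times the area of triangle $\triangle ABP$. Fix a point $A\in X$ and choose coordinates $(x,y)$ with $A=(0,0)$ and the $x$-axis tangent to $X$ at $A$, so that near $A$ the curve $X$ is the graph of a nonnegative strictly convex $C^3$ function $f$ defined on a neighborhood of $0$ with $f(0)=f'(0)=0$ and $f''(0)>0$. For $x\neq 0$ near $0$ let $g(x)$ be the number with $|g(x)|<|x|$ (lying between $0$ and $x$) such that $x f'(g(x))=f(x)$, i.e. the tangent of $X$ at $(g(x),f(g(x)))$ is parallel to the chord from $(0,0)$ to $(x,f(x))$; set $g(0)=0$. Then for all $x$ near $0$, $$x^3 f''(g(x))=8\{f(x)g(x)-xf(g(x))\},$$ $$x f(x)=\frac43\{f(x)g(x)-xf(g(x))\}+2\int_0^x f(t)\,dt.$$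
   Context: A curve in $\mathbb{R}^2$ is convex if it bounds a convex domain; a convex curve $X$ is strictly convex if it is connected, of class $C^{3}$, and has positive curvature with respect to the unit normal pointing to the convex side. The "region bounded by $X$ and the chord $AB$" is the region enclosed by the arc of $X$ between $A$ and $B$ and the segment $AB$. *)

theory Defs
  imports "HOL-Analysis.Analysis"
begin

definition cross2 :: "real \<times> real \<Rightarrow> real \<times> real \<Rightarrow> real" where
  "cross2 u v = fst u * snd v - snd u * fst v"

definition local_param ::
  "(real \<times> real) set \<Rightarrow> (real \<Rightarrow> real \<times> real) \<Rightarrow> (real \<Rightarrow> real \<times> real) \<Rightarrow>
   (real \<Rightarrow> real \<times> real) \<Rightarrow> (real \<Rightarrow> real \<times> real) \<Rightarrow> real \<Rightarrow> real \<Rightarrow> bool" where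
  "local_param X g g1 g2 g3 a b \<longleftrightarrow>
     a < b \<and> inj_on g {a<..<b} \<and> g ` {a<..<b} \<subseteq> X \<and>
     openin (top_of_set X) (g ` {a<..<b}) \<and>
     (\<forall>t\<in>{a<..<b}. (g has_vector_derivative g1 t) (at t) \<and>
                     (g1 has_vector_derivative g2 t) (at t) \<and>
                     (g2 has_vector_derivative g3 t) (at t) \<and> g1 t \<noteq> 0) \<and>
     continuous_on {a<..<b} g3"

definition inward_normal :: "(real \<times> real) set \<Rightarrow> real \<times> real \<Rightarrow> real \<times> real \<Rightarrow> real \<times> real \<Rightarrow> bool" where
  "inward_normal D p tau n \<longleftrightarrow> norm n = 1 \<and> n \<bullet> tau = 0 \<and>
     (\<exists>e>0. \<forall>s. 0 < s \<and> s < e \<longrightarrow> p + s *\<^sub>R n \<in> D)"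

definition curvature_wrt :: "real \<times> real \<Rightarrow> real \<times> real \<Rightarrow> real \<times> real \<Rightarrow> real" where
  "curvature_wrt v w n = (w \<bullet> n) / (norm v)\<^sup>2"

definition strictly_convex_curve :: "(real \<times> real) set \<Rightarrow> (real \<times> real) set \<Rightarrow> bool" where
  "strictly_convex_curve X D \<longleftrightarrow>
     open D \<and> convex D \<and> D \<noteq> {} \<and> X = frontier D \<and> X \<noteq> {} \<and> connected X \<and>
     (\<forall>P\<in>X. \<exists>g g1 g2 g3 a b t. local_param X g g1 g2 g3 a b \<and> t \<in> {a<..<b} \<and> g t = P) \<and>
     (\<forall>g g1 g2 g3 a b. local_param X g g1 g2 g3 a b \<longrightarrow>
        (\<forall>t\<in>{a<..<b}. \<forall>n. inward_normal D (g t) (g1 t) n \<longrightarrow>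
           curvature_wrt (g1 t) (g2 t) n > 0))"

definition tangent_direction :: "(real \<times> real) set \<Rightarrow> real \<times> real \<Rightarrow> real \<times> real \<Rightarrow> bool" where
  "tangent_direction X P v \<longleftrightarrow> v \<noteq> 0 \<and>
     (\<exists>g g1 g2 g3 a b t. local_param X g g1 g2 g3 a b \<and> t \<in> {a<..<b} \<and> g t = P \<and>
        cross2 v (g1 t) = 0)"

text \<open>Region bounded by X and the chord AB, on the side of P (the arc through P):
  the part of the convex domain D strictly on P's side of line AB.\<close>
definition cap_region :: "(real \<times> real) set \<Rightarrow> real \<times> real \<Rightarrow> real \<times> real \<Rightarrow> real \<times> real \<Rightarrow> (real \<times> real) set" where
  "cap_region D A B P = {z \<in> D. cross2 (B - A) (z - A) * cross2 (B - A) (P - A) > 0}"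

definition triangle_area :: "real \<times> real \<Rightarrow> real \<times> real \<Rightarrow> real \<times> real \<Rightarrow> real" where
  "triangle_area A B P = \<bar>cross2 (B - A) (P - A)\<bar> / 2"

definition condition_C :: "(real \<times> real) set \<Rightarrow> (real \<times> real) set \<Rightarrow> bool" where
  "condition_C X D \<longleftrightarrow>
     (\<forall>P A B v. P \<in> X \<and> A \<in> X \<and> B \<in> X \<and> A \<noteq> B \<and> tangent_direction X P v \<and>
        cross2 (B - A) v = 0 \<longrightarrow>
        measure lebesgue (cap_region D A B P) = 4/3 * triangle_area A B P)"

definition strictly_convex_fun_on :: "real set \<Rightarrow> (real \<Rightarrow> real) \<Rightarrow> bool" where
  "strictly_convex_fun_on I f \<longleftrightarrow>
     (\<forall>x\<in>I. \<forall>y\<in>I. x \<noteq> y \<longrightarrow> (\<forall>t. 0 < t \<and> t < 1 \<longrightarrow>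
        f ((1 - t) * x + t * y) < (1 - t) * f x + t * f y))"

end

(* Subtracting from f its tangent line at u gives a valley phi with phi u = phi' u = 0, and
   Condition (C), read in the graph chart, says that every horizontal chord [a, b] of phi at
   height h cuts off a cap of area 2/3 (b - a) h.  Parametrise these chords by their right end t
   and let alpha t be the left end.  Differentiating the cap law gives
   2 phi t (1 - alpha' t) = (t - alpha t) phi' t, so (t - alpha t)^2 / phi t is constant, and by
   Taylor's theorem at u it tends to 8 / phi'' u.  For the chord from 0 to x this is the first
   identity; the cap law for the same chord is the second. *)

theory Submission
  imports Defs
begin

lemma Taylor_second_order:
  fixes f f1 f2 :: "real \<Rightarrow> real"
  assumes f1: "\<And>t. t \<in> {a..b} \<Longrightarrow> (f has_real_derivative f1 t) (at t)"
    and f2: "\<And>t. t \<in> {a..b} \<Longrightarrow> (f1 has_real_derivative f2 t) (at t)"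
    and "c \<in> {a..b}" "x \<in> {a..b}" "x \<noteq> c"
  obtains \<xi> where "min x c < \<xi>" "\<xi> < max x c" "f x = f c + f1 c * (x - c) + f2 \<xi> / 2 * (x - c)\<^sup>2"
proof -
  define diff where "diff k = (if k = 0 then f else if k = 1 then f1 else f2)" for k :: nat
  have "\<exists>\<xi>. (if x < c then x < \<xi> \<and> \<xi> < c else c < \<xi> \<and> \<xi> < x) \<and>
      f x = (\<Sum>m<2. diff m c / fact m * (x - c)^m) + diff 2 \<xi> / fact 2 * (x - c)^2"
    by (rule Taylor) (use assms in \<open>auto simp: diff_def less_2_cases_iff\<close>)
  then show ?thesis
    using that by (auto simp: diff_def numeral_2_eq_2 lessThan_Suc split: if_splits)
qed

lemma DERIV_square_div_zero:
  fixes L h :: "real \<Rightarrow> real"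
  assumes "(L has_real_derivative L') (at t)" "(h has_real_derivative h') (at t)"
    and "h t \<noteq> 0" "2 * L' * h t = L t * h'"
  shows "((\<lambda>s. (L s)\<^sup>2 / h s) has_real_derivative 0) (at t)"
proof -
  have "((\<lambda>s. (L s)\<^sup>2 / h s) has_real_derivative
      (2 * L t * L' * h t - (L t)\<^sup>2 * h') / (h t * h t)) (at t)"
    using assms(1-3) by (auto intro!: derivative_eq_intros simp: power2_eq_square)
  moreover have "2 * L t * L' * h t - (L t)\<^sup>2 * h' = 0"
    using assms(4) by (simp add: power2_eq_square algebra_simps)
  ultimately show ?thesis by simp
qed

locale convex_valley =
  fixes \<phi> \<phi>1 \<phi>2 :: "real \<Rightarrow> real" and a0 c b0 :: real
  assumes ordered: "a0 < c" "c < b0"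
    and phi_deriv: "\<And>t. t \<in> {a0..b0} \<Longrightarrow> (\<phi> has_real_derivative \<phi>1 t) (at t)"
    and phi1_deriv: "\<And>t. t \<in> {a0..b0} \<Longrightarrow> (\<phi>1 has_real_derivative \<phi>2 t) (at t)"
    and phi2_pos: "\<And>t. t \<in> {a0..b0} \<Longrightarrow> 0 < \<phi>2 t"
    and bottom: "\<phi> c = 0" "\<phi>1 c = 0"
    and same_level: "\<phi> a0 = \<phi> b0"
begin

lemma continuous_on_phi: "continuous_on {a0..b0} \<phi>"
  using phi_deriv by (meson DERIV_isCont continuous_at_imp_continuous_on)

lemma phi1_less:
  assumes "a0 \<le> s" "s < t" "t \<le> b0"
  shows "\<phi>1 s < \<phi>1 t"
proof (rule DERIV_pos_imp_increasing[OF \<open>s < t\<close>])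
  fix x assume "s \<le> x" "x \<le> t"
  then have "x \<in> {a0..b0}" using assms by auto
  then show "\<exists>y. DERIV \<phi>1 x :> y \<and> y > 0" using phi1_deriv phi2_pos by blast
qed

lemma phi1_neg: "a0 \<le> t \<Longrightarrow> t < c \<Longrightarrow> \<phi>1 t < 0"
  using phi1_less[of t c] ordered bottom by simp

lemma phi1_pos: "c < t \<Longrightarrow> t \<le> b0 \<Longrightarrow> 0 < \<phi>1 t"
  using phi1_less[of c t] ordered bottom by simp

lemma phi_decreasing:
  assumes "a0 \<le> s" "s < t" "t \<le> c"
  shows "\<phi> t < \<phi> s"
proof (rule DERIV_neg_imp_decreasing_open[OF \<open>s < t\<close>])
  fix x assume "s < x" "x < t"
  then show "\<exists>y. DERIV \<phi> x :> y \<and> y < 0"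
    using assms ordered phi_deriv phi1_neg by (intro exI[of _ "\<phi>1 x"]) auto
next
  show "continuous_on {s..t} \<phi>"
    by (rule continuous_on_subset[OF continuous_on_phi]) (use assms ordered in auto)
qed

lemma phi_increasing:
  assumes "c \<le> s" "s < t" "t \<le> b0"
  shows "\<phi> s < \<phi> t"
proof (rule DERIV_pos_imp_increasing_open[OF \<open>s < t\<close>])
  fix x assume "s < x" "x < t"
  then show "\<exists>y. DERIV \<phi> x :> y \<and> y > 0"
    using assms ordered phi_deriv phi1_pos by (intro exI[of _ "\<phi>1 x"]) auto
next
  show "continuous_on {s..t} \<phi>"
    by (rule continuous_on_subset[OF continuous_on_phi]) (use assms ordered in auto)
qed

lemma phi_taylor:
  assumes "t \<in> {a0..b0}" "t \<noteq> c"
  obtains \<xi> where "min t c < \<xi>" "\<xi> < max t c" "\<phi> t = \<phi>2 \<xi> / 2 * (t - c)\<^sup>2"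
proof -
  have "c \<in> {a0..b0}" using ordered by simp
  from Taylor_second_order[OF phi_deriv phi1_deriv this assms] obtain \<xi> where
    "min t c < \<xi>" "\<xi> < max t c" "\<phi> t = \<phi> c + \<phi>1 c * (t - c) + \<phi>2 \<xi> / 2 * (t - c)\<^sup>2" .
  then show ?thesis using that bottom by simp
qed

lemma phi_pos:
  assumes "t \<in> {a0..b0}" "t \<noteq> c"
  shows "0 < \<phi> t"
proof -
  obtain \<xi> where \<xi>: "min t c < \<xi>" "\<xi> < max t c" "\<phi> t = \<phi>2 \<xi> / 2 * (t - c)\<^sup>2"
    using phi_taylor[OF assms] .
  have "0 < \<phi>2 \<xi>" using \<xi>(1,2) assms(1) ordered by (intro phi2_pos) auto
  moreover have "0 < (t - c)\<^sup>2" using assms(2) by simp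
  ultimately show ?thesis unfolding \<xi>(3) by (intro mult_pos_pos) simp_all
qed

definition partner :: "real \<Rightarrow> real" where
  "partner t = the_inv_into {a0..c} \<phi> (\<phi> t)"

lemma inj_on_phi_left: "inj_on \<phi> {a0..c}"
  by (rule inj_onI) (metis atLeastAtMost_iff linorder_cases order_less_irrefl phi_decreasing)

lemma phi_left_image: "\<phi> ` {a0..c} = {0..\<phi> a0}"
proof
  show "\<phi> ` {a0..c} \<subseteq> {0..\<phi> a0}"
    using phi_decreasing bottom by (force simp: le_less)
  show "{0..\<phi> a0} \<subseteq> \<phi> ` {a0..c}"
  proof
    fix y assume "y \<in> {0..\<phi> a0}"
    then have "\<exists>x. a0 \<le> x \<and> x \<le> c \<and> \<phi> x = y"
      using ordered bottom
      by (intro IVT2') (auto intro: continuous_on_subset[OF continuous_on_phi])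
    then show "y \<in> \<phi> ` {a0..c}" by auto
  qed
qed

lemma phi_right_range: "t \<in> {c..b0} \<Longrightarrow> \<phi> t \<in> {0..\<phi> a0}"
  using phi_increasing[of c t] phi_increasing[of t b0] bottom same_level by (force simp: le_less)

lemma partner_mem: "t \<in> {c..b0} \<Longrightarrow> partner t \<in> {a0..c}"
  unfolding partner_def using phi_right_range phi_left_image
  by (metis the_inv_into_into inj_on_phi_left order_refl)

lemma phi_partner: "t \<in> {c..b0} \<Longrightarrow> \<phi> (partner t) = \<phi> t"
  unfolding partner_def using phi_right_range phi_left_image
  by (metis f_the_inv_into_f inj_on_phi_left)

lemma partner_c: "partner c = c"
  unfolding partner_def using ordered by (simp add: the_inv_into_f_f[OF inj_on_phi_left])

lemma partner_b0: "partner b0 = a0"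
  unfolding partner_def using ordered same_level[symmetric]
  by (simp add: the_inv_into_f_f[OF inj_on_phi_left])

lemma partner_less: "t \<in> {c<..b0} \<Longrightarrow> partner t < c"
  using partner_mem[of t] phi_partner[of t] phi_pos[of t] bottom ordered
  by (cases "partner t = c") auto

lemma partner_greater: "t \<in> {c..<b0} \<Longrightarrow> a0 < partner t"
  using partner_mem[of t] phi_partner[of t] phi_increasing[of t b0] same_level
  by (cases "partner t = a0") auto

lemma continuous_on_partner: "continuous_on {c..b0} partner"
proof -
  have "continuous_on (\<phi> ` {a0..c}) (the_inv_into {a0..c} \<phi>)"
    by (rule continuous_on_inv_into[OF _ compact_Icc inj_on_phi_left])
      (rule continuous_on_subset[OF continuous_on_phi], use ordered in auto)
  then show ?thesis
    unfolding partner_def phi_left_image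
    by (rule continuous_on_compose2[OF _ continuous_on_subset[OF continuous_on_phi]])
      (use ordered phi_right_range in auto)
qed

lemma partner_tendsto: "(partner \<longlongrightarrow> c) (at_right c)"
  using continuous_on_Icc_at_rightD[OF continuous_on_partner ordered(2)] by (simp add: partner_c)

lemma partner_deriv:
  assumes t: "c < t" "t < b0"
  shows "(partner has_real_derivative \<phi>1 t / \<phi>1 (partner t)) (at t)"
proof -
  let ?\<psi> = "the_inv_into {a0..c} \<phi>"
  have y: "0 < \<phi> t" "\<phi> t < \<phi> a0"
    using phi_pos[of t] phi_increasing[of t b0] same_level t ordered by auto
  have p: "a0 < partner t" "partner t < c"
    using partner_greater[of t] partner_less[of t] t by auto
  have "(?\<psi> has_real_derivative inverse (\<phi>1 (partner t))) (at (\<phi> t))"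
  proof (rule DERIV_inverse_function[where a=0 and b="\<phi> a0"])
    show "(\<phi> has_real_derivative \<phi>1 (partner t)) (at (?\<psi> (\<phi> t)))"
      using phi_deriv p ordered by (simp add: partner_def[symmetric])
    show "\<phi>1 (partner t) \<noteq> 0" using phi1_neg[of "partner t"] p by simp
    show "\<phi> (?\<psi> y) = y" if "0 < y" "y < \<phi> a0" for y
      using that phi_left_image by (intro f_the_inv_into_f[OF inj_on_phi_left]) auto
    have "continuous_on {0..\<phi> a0} ?\<psi>"
      using continuous_on_inv_into[OF continuous_on_subset[OF continuous_on_phi] compact_Icc inj_on_phi_left]
        ordered phi_left_image by auto
    then show "isCont ?\<psi> (\<phi> t)"
      using y by (intro continuous_on_interior[of "{0..\<phi> a0}"]) auto
  qed (use y in auto)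
  from DERIV_chain2[OF this phi_deriv[of t]] show ?thesis
    using t ordered by (simp add: partner_def[abs_def] divide_inverse mult.commute)
qed

lemma taylor_distance_to_bottom:
  obtains \<xi> where "\<And>t. t \<in> {a0..b0} - {c} \<Longrightarrow>
    min t c < \<xi> t \<and> \<xi> t < max t c \<and> \<bar>t - c\<bar> = sqrt (\<phi> t) * sqrt (2 / \<phi>2 (\<xi> t))"
proof -
  have "\<exists>\<xi>. min t c < \<xi> \<and> \<xi> < max t c \<and> \<bar>t - c\<bar> = sqrt (\<phi> t) * sqrt (2 / \<phi>2 \<xi>)"
    if t: "t \<in> {a0..b0} - {c}" for t
  proof -
    obtain \<xi> where \<xi>: "min t c < \<xi>" "\<xi> < max t c" "\<phi> t = \<phi>2 \<xi> / 2 * (t - c)\<^sup>2"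
      using phi_taylor t by blast
    have "0 < \<phi>2 \<xi>" using \<xi>(1,2) t ordered by (intro phi2_pos) auto
    then have "(t - c)\<^sup>2 = \<phi> t * (2 / \<phi>2 \<xi>)" using \<xi>(3) by (simp add: field_simps)
    then have "\<bar>t - c\<bar> = sqrt (\<phi> t) * sqrt (2 / \<phi>2 \<xi>)" by (metis real_sqrt_abs real_sqrt_mult)
    with \<xi>(1,2) show ?thesis by blast
  qed
  then show ?thesis using that by metis
qed

lemma width_ratio_tendsto:
  assumes cont: "isCont \<phi>2 c"
  shows "((\<lambda>t. (t - partner t)\<^sup>2 / \<phi> t) \<longlongrightarrow> 8 / \<phi>2 c) (at_right c)"
proof -
  obtain \<xi> where \<xi>: "\<And>t. t \<in> {a0..b0} - {c} \<Longrightarrow>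
      min t c < \<xi> t \<and> \<xi> t < max t c \<and> \<bar>t - c\<bar> = sqrt (\<phi> t) * sqrt (2 / \<phi>2 (\<xi> t))"
    using taylor_distance_to_bottom by blast
  define r where "r t = sqrt (2 / \<phi>2 (\<xi> t))" for t
  have near: "\<forall>\<^sub>F t in at_right c. c < t \<and> t < b0"
    using eventually_at_right_less[of c] eventually_at_right_real[OF ordered(2)]
    by eventually_elim auto
  have right: "c < \<xi> t \<and> \<xi> t < t" if "c < t" "t < b0" for t
    using \<xi>[of t] that ordered by auto
  have left: "a0 \<le> partner t \<and> partner t < \<xi> (partner t) \<and> \<xi> (partner t) < c" if "c < t" "t < b0" for t
    using \<xi>[of "partner t"] partner_mem[of t] partner_less[of t] that by auto
  have ratio: "(t - partner t)\<^sup>2 / \<phi> t = (r t + r (partner t))\<^sup>2" if t: "c < t" "t < b0" for t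
  proof -
    have "t - partner t = \<bar>t - c\<bar> + \<bar>partner t - c\<bar>" using left[OF t] t by simp
    also have "\<dots> = sqrt (\<phi> t) * (r t + r (partner t))"
      using \<xi>[of t] \<xi>[of "partner t"] left[OF t] phi_partner[of t] t ordered
      by (simp add: r_def distrib_left)
    finally show ?thesis
      using phi_pos[of t] t ordered by (simp add: power_mult_distrib)
  qed
  have "(\<xi> \<longlongrightarrow> c) (at_right c)"
    by (rule real_tendsto_sandwich[OF _ _ tendsto_const tendsto_ident_at])
      (use near in \<open>auto elim!: eventually_mono dest: right\<close>)
  moreover have "((\<lambda>t. \<xi> (partner t)) \<longlongrightarrow> c) (at_right c)"
    by (rule real_tendsto_sandwich[OF _ _ partner_tendsto tendsto_const])
      (use near in \<open>auto elim!: eventually_mono dest: left\<close>)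
  moreover have "0 < \<phi>2 c" using phi2_pos[of c] ordered by simp
  ultimately have "((\<lambda>t. (r t + r (partner t))\<^sup>2) \<longlongrightarrow> (sqrt (2 / \<phi>2 c) + sqrt (2 / \<phi>2 c))\<^sup>2) (at_right c)"
    unfolding r_def by (intro tendsto_intros isCont_tendsto_compose[OF cont]) auto
  also have "(sqrt (2 / \<phi>2 c) + sqrt (2 / \<phi>2 c))\<^sup>2 = 8 / \<phi>2 c"
    using \<open>0 < \<phi>2 c\<close> by (simp add: power_mult_distrib)
  finally show ?thesis
    by (rule Lim_transform_eventually) (use near in \<open>eventually_elim, simp add: ratio\<close>)
qed

end

locale archimedes_valley = convex_valley +
  assumes cap_area: "\<And>a b. a0 \<le> a \<Longrightarrow> a < c \<Longrightarrow> c < b \<Longrightarrow> b \<le> b0 \<Longrightarrow> \<phi> a = \<phi> b \<Longrightarrow>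
      integral {a..b} (\<lambda>t. \<phi> a - \<phi> t) = 2/3 * (b - a) * \<phi> a"
begin

lemma integral_between_partners:
  assumes "c < t" "t < b0"
  shows "integral {a0..t} \<phi> - integral {a0..partner t} \<phi> = (t - partner t) * \<phi> t / 3"
proof -
  have p: "a0 < partner t" "partner t < c" "\<phi> (partner t) = \<phi> t"
    using partner_greater[of t] partner_less[of t] phi_partner[of t] assms by auto
  have "\<phi> integrable_on {a0..t}"
    using assms ordered by (intro integrable_continuous_interval continuous_on_subset[OF continuous_on_phi]) auto
  then have "integral {a0..t} \<phi> = integral {a0..partner t} \<phi> + integral {partner t..t} \<phi>"
    using Henstock_Kurzweil_Integration.integral_combine[where a=a0 and c="partner t" and b=t] p assms
    by (metis less_imp_le order.strict_trans)
  moreover have "integral {partner t..t} (\<lambda>r. \<phi> (partner t) - \<phi> r) = (t - partner t) * \<phi> t - integral {partner t..t} \<phi>"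
    using assms p
    by (simp add: integral_diff integrable_continuous_interval continuous_on_subset[OF continuous_on_phi])
  moreover have "integral {partner t..t} (\<lambda>r. \<phi> (partner t) - \<phi> r) = 2/3 * ((t - partner t) * \<phi> t)"
    using cap_area[of "partner t" t] assms p by simp
  ultimately show ?thesis by linarith
qed

text \<open>The cap law, differentiated along the family of chords [partner t, t].\<close>

lemma partner_ode:
  assumes t: "c < t" "t < b0"
  shows "2 * (1 - \<phi>1 t / \<phi>1 (partner t)) * \<phi> t = (t - partner t) * \<phi>1 t"
proof -
  define \<Phi> where "\<Phi> s = integral {a0..s} \<phi>" for s
  define A where "A = \<phi>1 t / \<phi>1 (partner t)"
  have d\<Phi>: "(\<Phi> has_real_derivative \<phi> s) (at s)" if "a0 < s" "s < b0" for s
    using integral_has_real_derivative[OF continuous_on_phi, of s] that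
    by (simp add: \<Phi>_def[abs_def] at_within_Icc_at)
  have dp: "(partner has_real_derivative A) (at t)"
    unfolding A_def by (rule partner_deriv[OF t])
  have p: "a0 < partner t" "partner t < c" "\<phi> (partner t) = \<phi> t"
    using partner_greater[of t] partner_less[of t] phi_partner[of t] t by auto
  have "((\<lambda>s. \<Phi> s - \<Phi> (partner s)) has_real_derivative \<phi> t - \<phi> (partner t) * A) (at t)"
    using t p ordered by (auto intro!: derivative_eq_intros d\<Phi> dp DERIV_chain2[OF d\<Phi>])
  moreover have "((\<lambda>s. \<Phi> s - \<Phi> (partner s)) has_real_derivative ((1 - A) * \<phi> t + (t - partner t) * \<phi>1 t) / 3) (at t)"
  proof (rule has_field_derivative_transform_within_open[where S="{c<..<b0}"])
    show "((\<lambda>s. (s - partner s) * \<phi> s / 3) has_real_derivative ((1 - A) * \<phi> t + (t - partner t) * \<phi>1 t) / 3) (at t)"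
      using t ordered by (auto intro!: derivative_eq_intros dp phi_deriv)
    show "(s - partner s) * \<phi> s / 3 = \<Phi> s - \<Phi> (partner s)" if "s \<in> {c<..<b0}" for s
      using integral_between_partners[of s] that by (simp add: \<Phi>_def)
  qed (use t in auto)
  ultimately have "\<phi> t - \<phi> (partner t) * A = ((1 - A) * \<phi> t + (t - partner t) * \<phi>1 t) / 3"
    by (rule DERIV_unique)
  then show ?thesis using p t by (simp add: A_def[symmetric] algebra_simps)
qed

lemma width_ratio_const:
  assumes t: "c < t" "t \<le> b0"
  shows "(t - partner t)\<^sup>2 / \<phi> t = (b0 - a0)\<^sup>2 / \<phi> a0"
proof (cases "t = b0")
  case True
  then show ?thesis by (simp add: partner_b0 same_level)
next
  case False
  have "(b0 - partner b0)\<^sup>2 / \<phi> b0 = (t - partner t)\<^sup>2 / \<phi> t"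
  proof (rule DERIV_isconst_end[where f="\<lambda>s. (s - partner s)\<^sup>2 / \<phi> s"])
    show "t < b0" using t False by simp
    have "\<phi> s \<noteq> 0" if "s \<in> {t..b0}" for s
      using phi_pos[of s] that t ordered by auto
    then show "continuous_on {t..b0} (\<lambda>s. (s - partner s)\<^sup>2 / \<phi> s)"
      using t ordered
      by (intro continuous_intros continuous_on_subset[OF continuous_on_partner]
          continuous_on_subset[OF continuous_on_phi]) auto
    fix s assume s: "t < s" "s < b0"
    show "((\<lambda>s. (s - partner s)\<^sup>2 / \<phi> s) has_real_derivative 0) (at s)"
    proof (rule DERIV_square_div_zero)
      show "((\<lambda>s. s - partner s) has_real_derivative 1 - \<phi>1 s / \<phi>1 (partner s)) (at s)"
        using s t by (auto intro!: derivative_eq_intros partner_deriv)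
      show "(\<phi> has_real_derivative \<phi>1 s) (at s)" using s t ordered by (intro phi_deriv) auto
      show "\<phi> s \<noteq> 0" using phi_pos[of s] s t ordered by auto
      show "2 * (1 - \<phi>1 s / \<phi>1 (partner s)) * \<phi> s = (s - partner s) * \<phi>1 s"
        using s t by (intro partner_ode) auto
    qed
  qed
  then show ?thesis by (simp add: partner_b0 same_level)
qed

theorem width_sq_curvature_eq:
  assumes "isCont \<phi>2 c"
  shows "(b0 - a0)\<^sup>2 * \<phi>2 c = 8 * \<phi> a0"
proof -
  have "((\<lambda>t. (t - partner t)\<^sup>2 / \<phi> t) \<longlongrightarrow> (b0 - a0)\<^sup>2 / \<phi> a0) (at_right c)"
    by (rule Lim_transform_eventually[OF tendsto_const])
      (use eventually_at_right_real[OF ordered(2)] in \<open>eventually_elim, simp add: width_ratio_const\<close>)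
  with width_ratio_tendsto[OF assms] have "(b0 - a0)\<^sup>2 / \<phi> a0 = 8 / \<phi>2 c"
    by (intro tendsto_unique[OF trivial_limit_at_right_real])
  moreover have "0 < \<phi> a0" "0 < \<phi>2 c" using phi_pos[of a0] phi2_pos[of c] ordered by auto
  ultimately show ?thesis by (simp add: field_simps)
qed

end

definition between_graphs :: "real \<Rightarrow> real \<Rightarrow> (real \<Rightarrow> real) \<Rightarrow> (real \<Rightarrow> real) \<Rightarrow> (real \<times> real) set" where
  "between_graphs a b lo hi = {p. a < fst p \<and> fst p < b \<and> lo (fst p) < snd p \<and> snd p < hi (fst p)}"

lemma between_graphs_eq_vimage:
  "between_graphs a b lo hi =
     ({a<..<b} \<times> UNIV) \<inter> (\<lambda>p. (snd p - lo (fst p), hi (fst p) - snd p)) -` ({0<..} \<times> {0<..})"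
  by (auto simp: between_graphs_def)

lemma open_between_graphs:
  assumes "continuous_on {a<..<b} lo" "continuous_on {a<..<b} hi"
  shows "open (between_graphs a b lo hi)"
  unfolding between_graphs_eq_vimage
  by (intro continuous_open_preimage open_Times open_greaterThan open_greaterThanLessThan open_UNIV
      continuous_intros continuous_on_compose2[OF assms(1)] continuous_on_compose2[OF assms(2)]) auto

lemma closure_between_graphs_subset:
  assumes "continuous_on {a..b} lo" "continuous_on {a..b} hi"
  shows "closure (between_graphs a b lo hi) \<subseteq>
    {p. a \<le> fst p \<and> fst p \<le> b \<and> lo (fst p) \<le> snd p \<and> snd p \<le> hi (fst p)}"
proof (rule closure_minimal)
  have "{p. a \<le> fst p \<and> fst p \<le> b \<and> lo (fst p) \<le> snd p \<and> snd p \<le> hi (fst p)} =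
      ({a..b} \<times> UNIV) \<inter> (\<lambda>p. (snd p - lo (fst p), hi (fst p) - snd p)) -` ({0..} \<times> {0..})"
    by auto
  also have "closed \<dots>"
    by (intro continuous_closed_preimage closed_Times closed_atLeast closed_atLeastAtMost closed_UNIV
        continuous_intros continuous_on_compose2[OF assms(1)] continuous_on_compose2[OF assms(2)]) auto
  finally show "closed {p. a \<le> fst p \<and> fst p \<le> b \<and> lo (fst p) \<le> snd p \<and> snd p \<le> hi (fst p)}" .
qed (auto simp: between_graphs_def)

lemma measure_between_graphs:
  assumes "a \<le> b" and lo: "continuous_on {a..b} lo" and hi: "continuous_on {a..b} hi"
    and le: "\<And>t. t \<in> {a..b} \<Longrightarrow> lo t \<le> hi t"
  shows "measure lebesgue (between_graphs a b lo hi) = integral {a..b} (\<lambda>t. hi t - lo t)"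
proof -
  let ?R = "between_graphs a b lo hi"
  have "open ?R"
    using lo hi by (intro open_between_graphs) (auto intro: continuous_on_subset)
  then have R: "?R \<in> sets lborel" by simp
  have int: "((\<lambda>t. hi t - lo t) has_integral integral {a..b} (\<lambda>t. hi t - lo t)) {a..b}"
    using lo hi by (intro integrable_integral integrable_continuous_interval continuous_intros)
  have "emeasure lborel ?R = emeasure (lborel \<Otimes>\<^sub>M lborel) ?R"
    by (simp add: lborel_prod)
  also have "\<dots> = (\<integral>\<^sup>+x. emeasure lborel (Pair x -` ?R) \<partial>lborel)"
    by (rule lborel.emeasure_pair_measure_alt) (subst lborel_prod, rule R)
  also have "\<dots> = (\<integral>\<^sup>+x. ennreal (hi x - lo x) * indicator {a<..<b} x \<partial>lborel)"
  proof (rule nn_integral_cong)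
    fix x :: real
    show "emeasure lborel (Pair x -` ?R) = ennreal (hi x - lo x) * indicator {a<..<b} x"
    proof (cases "a < x \<and> x < b")
      case True
      then have "Pair x -` ?R = {lo x<..<hi x}" by (auto simp: between_graphs_def)
      then show ?thesis using True le[of x] by (simp add: indicator_def)
    next
      case False
      then have "Pair x -` ?R = {}" by (auto simp: between_graphs_def)
      then show ?thesis using False by (simp add: indicator_def)
    qed
  qed
  also have "\<dots> = ennreal (integral {a..b} (\<lambda>t. hi t - lo t))"
    by (rule nn_integral_has_integral_lebesgue')
      (use le int in \<open>auto simp: has_integral_Icc_iff_Ioo[symmetric]\<close>)
  finally show ?thesis
    using R has_integral_nonneg[OF int] le by (simp add: measure_def)
qed

lemma convex_Pair_interpolate:
  fixes x1 y1 x2 y2 \<theta> :: real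
  assumes "convex S" "(x1, y1) \<in> S" "(x2, y2) \<in> S" "0 \<le> \<theta>" "\<theta> \<le> 1"
  shows "(x1 + \<theta> * (x2 - x1), y1 + \<theta> * (y2 - y1)) \<in> S"
proof -
  have "(1 - \<theta>) *\<^sub>R (x1, y1) + \<theta> *\<^sub>R (x2, y2) \<in> S"
    using assms by (intro convexD) auto
  moreover have "(1 - \<theta>) *\<^sub>R (x1, y1) + \<theta> *\<^sub>R (x2, y2) = (x1 + \<theta> * (x2 - x1), y1 + \<theta> * (y2 - y1))"
    by (simp add: algebra_simps)
  ultimately show ?thesis by simp
qed

lemma interval_integral_eq_signed_integral:
  fixes g :: "real \<Rightarrow> real"
  assumes "continuous_on {min a b..max a b} g"
  shows "(LBINT t=ereal a..ereal b. g t) = (if a \<le> b then integral {a..b} g else - integral {b..a} g)"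
proof (cases "a \<le> b")
  case True
  then show ?thesis
    using assms by (simp add: interval_integral_eq_integral borel_integrable_atLeastAtMost')
next
  case False
  then show ?thesis
    using assms by (subst interval_integral_endpoints_reverse)
      (simp add: interval_integral_eq_integral borel_integrable_atLeastAtMost')
qed

locale convex_graph_chart =
  fixes X D :: "(real \<times> real) set" and f f1 f2 f3 :: "real \<Rightarrow> real" and \<epsilon> :: real
  assumes open_D: "open D" and convex_D: "convex D" and frontier_D: "X = frontier D"
    and deriv: "\<And>t. t \<in> {-\<epsilon><..<\<epsilon>} \<Longrightarrow> (f has_real_derivative f1 t) (at t) \<and>
      (f1 has_real_derivative f2 t) (at t) \<and> (f2 has_real_derivative f3 t) (at t)"
    and continuous_f3: "continuous_on {-\<epsilon><..<\<epsilon>} f3"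
    and strictly_convex: "strictly_convex_fun_on {-\<epsilon><..<\<epsilon>} f"
    and graph_openin: "openin (top_of_set X) ((\<lambda>t. (t, f t)) ` {-\<epsilon><..<\<epsilon>})"
begin

lemma graph_in_X: "t \<in> {-\<epsilon><..<\<epsilon>} \<Longrightarrow> (t, f t) \<in> X"
  using openin_subset[OF graph_openin] by auto

lemma graph_notin_D: "t \<in> {-\<epsilon><..<\<epsilon>} \<Longrightarrow> (t, f t) \<notin> D"
  using graph_in_X frontier_D open_D by (auto simp: frontier_def interior_open)

lemma graph_in_closure_D: "t \<in> {-\<epsilon><..<\<epsilon>} \<Longrightarrow> (t, f t) \<in> closure D"
  using graph_in_X frontier_D by (auto simp: frontier_def)

lemma continuous_on_f: "continuous_on {-\<epsilon><..<\<epsilon>} f"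
  using deriv by (meson DERIV_isCont continuous_at_imp_continuous_on)

lemma tangent_direction_graph:
  assumes "c \<in> {-\<epsilon><..<\<epsilon>}"
  shows "tangent_direction X (c, f c) (1, f1 c)"
proof -
  have "local_param X (\<lambda>t. (t, f t)) (\<lambda>t. (1, f1 t)) (\<lambda>t. (0, f2 t)) (\<lambda>t. (0, f3 t)) (-\<epsilon>) \<epsilon>"
    unfolding local_param_def
  proof (intro conjI ballI)
    show "-\<epsilon> < \<epsilon>" using assms by simp
    show "inj_on (\<lambda>t. (t, f t)) {-\<epsilon><..<\<epsilon>}" by (rule inj_onI) simp
    show "(\<lambda>t. (t, f t)) ` {-\<epsilon><..<\<epsilon>} \<subseteq> X" using graph_in_X by auto
    show "openin (top_of_set X) ((\<lambda>t. (t, f t)) ` {-\<epsilon><..<\<epsilon>})" by (rule graph_openin)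
    show "continuous_on {-\<epsilon><..<\<epsilon>} (\<lambda>t. (0::real, f3 t))"
      by (intro continuous_on_Pair continuous_on_const continuous_f3)
    fix t assume t: "t \<in> {-\<epsilon><..<\<epsilon>}"
    show "((\<lambda>t. (t, f t)) has_vector_derivative (1, f1 t)) (at t)"
      using deriv[OF t] by (intro has_vector_derivative_Pair has_vector_derivative_id)
        (simp add: has_real_derivative_iff_has_vector_derivative)
    show "((\<lambda>t. (1::real, f1 t)) has_vector_derivative (0, f2 t)) (at t)"
      using deriv[OF t] by (intro has_vector_derivative_Pair has_vector_derivative_const)
        (simp add: has_real_derivative_iff_has_vector_derivative)
    show "((\<lambda>t. (0::real, f2 t)) has_vector_derivative (0, f3 t)) (at t)"
      using deriv[OF t] by (intro has_vector_derivative_Pair has_vector_derivative_const)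
        (simp add: has_real_derivative_iff_has_vector_derivative)
    show "(1::real, f1 t) \<noteq> 0" by (simp add: zero_prod_def)
  qed
  then show ?thesis
    using assms unfolding tangent_direction_def
    by (intro conjI exI[of _ "-\<epsilon>"]) (auto simp: cross2_def zero_prod_def intro!: exI)
qed

lemma graph_below_chord:
  assumes "-\<epsilon> < a" "a < t" "t < b" "b < \<epsilon>" "f b - f a = k * (b - a)"
  shows "f t < f a + k * (t - a)"
proof -
  define \<theta> where "\<theta> = (t - a) / (b - a)"
  have \<theta>: "0 < \<theta>" "\<theta> < 1" "\<theta> * (b - a) = t - a"
    using assms by (auto simp: \<theta>_def field_simps)
  have "(1 - \<theta>) * a + \<theta> * b = a + \<theta> * (b - a)" by (simp add: algebra_simps)
  with \<theta>(3) have t: "(1 - \<theta>) * a + \<theta> * b = t" by simp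
  have fb: "f b = f a + k * (b - a)" using assms(5) by simp
  have "f t < (1 - \<theta>) * f a + \<theta> * f b"
    using strictly_convex \<theta> assms t unfolding strictly_convex_fun_on_def by force
  also have "\<dots> = f a + k * (\<theta> * (b - a))"
    unfolding fb by (simp add: algebra_simps)
  finally show ?thesis using \<theta>(3) by simp
qed

lemma between_graph_and_chord_subset_D:
  assumes "-\<epsilon> < a" "a < b" "b < \<epsilon>" "f b - f a = k * (b - a)"
  shows "between_graphs a b f (\<lambda>t. f a + k * (t - a)) \<subseteq> D"
proof -
  let ?line = "\<lambda>t. f a + k * (t - a)"
  let ?R = "between_graphs a b f ?line"
  have "?R \<subseteq> closure D"
  proof
    fix p assume "p \<in> ?R"
    then obtain x y where p: "p = (x, y)" "a < x" "x < b" "f x < y" "y < ?line x"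
      by (cases p) (auto simp: between_graphs_def)
    define \<theta> where "\<theta> = (x - a) / (b - a)"
    have \<theta>: "\<theta> * (b - a) = x - a" using assms by (simp add: \<theta>_def)
    have "(a + \<theta> * (b - a), f a + \<theta> * (f b - f a)) \<in> closure D"
      using assms p by (intro convex_Pair_interpolate convex_closure convex_D graph_in_closure_D)
        (auto simp: \<theta>_def)
    also have "(a + \<theta> * (b - a), f a + \<theta> * (f b - f a)) = (x, ?line x)"
      using \<theta> assms(4) by (simp add: mult.left_commute)
    finally have "(x, ?line x) \<in> closure D" .
    then have "(x + (y - f x) / (?line x - f x) * (x - x), f x + (y - f x) / (?line x - f x) * (?line x - f x))
        \<in> closure D"
      using assms p by (intro convex_Pair_interpolate convex_closure convex_D graph_in_closure_D) auto
    then show "p \<in> closure D" using p by simp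
  qed
  moreover have "open ?R"
    using continuous_on_f assms
    by (intro open_between_graphs continuous_intros) (auto elim!: continuous_on_subset)
  ultimately have "?R \<subseteq> interior (closure D)"
    by (rule interior_maximal)
  then show ?thesis
    using convex_interior_closure[OF convex_D] open_D by (simp add: interior_open)
qed

text \<open>A convex set meeting R without lying inside it meets the frontier of R; but that frontier
  lies on the graph, which is outside D, or on the vertical sides, where chord and graph meet.\<close>

lemma D_below_chord_subset_between_graphs:
  assumes ab: "-\<epsilon> < a" "a < b" "b < \<epsilon>" and slope: "f b - f a = k * (b - a)"
  shows "{z \<in> D. snd z < f a + k * (fst z - a)} \<subseteq> between_graphs a b f (\<lambda>t. f a + k * (t - a))"
    (is "?S \<subseteq> ?R")
proof (rule ccontr)
  let ?line = "\<lambda>t. f a + k * (t - a)"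
  assume "\<not> ?S \<subseteq> ?R"
  moreover have "?R \<subseteq> ?S"
    using between_graph_and_chord_subset_D[OF ab slope] by (auto simp: between_graphs_def)
  moreover have "((a + b) / 2, (f ((a + b) / 2) + ?line ((a + b) / 2)) / 2) \<in> ?R"
    using graph_below_chord[OF _ _ _ _ slope, of "(a + b) / 2"] ab
    by (simp add: between_graphs_def field_simps)
  moreover have "convex ?S"
  proof -
    have "?S = D \<inter> {z. (- k, 1) \<bullet> z < f a - k * a}"
      by (auto simp: algebra_simps)
    then show ?thesis using convex_D convex_halfspace_lt convex_Int by metis
  qed
  ultimately obtain z where z: "z \<in> ?S" "z \<in> frontier ?R"
    using connected_Int_frontier[OF convex_connected, of ?S ?R] by blast
  have cont: "continuous_on {a..b} f" "continuous_on {a..b} ?line"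
    using ab by (auto intro!: continuous_intros continuous_on_subset[OF continuous_on_f])
  have "open ?R" using cont by (intro open_between_graphs) (auto elim: continuous_on_subset)
  then have "z \<in> closure ?R" "z \<notin> ?R" using z(2) by (auto simp: frontier_def interior_open)
  then have zR: "a \<le> fst z" "fst z \<le> b" "f (fst z) \<le> snd z" "z \<notin> ?R"
    using closure_between_graphs_subset[OF cont] by auto
  show False
  proof (cases "fst z = a \<or> fst z = b")
    case True
    then show False using zR z(1) slope by auto
  next
    case False
    then have "snd z = f (fst z)" "fst z \<in> {-\<epsilon><..<\<epsilon>}"
      using zR z(1) ab by (auto simp: between_graphs_def)
    then show False using graph_notin_D[of "fst z"] z(1) by (metis (no_types, lifting) mem_Collect_eq prod.collapse)
  qed
qed

lemma cap_region_eq_between_graphs: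
  assumes ab: "-\<epsilon> < a" "a < c" "c < b" "b < \<epsilon>" and slope: "f b - f a = k * (b - a)"
  shows "cap_region D (a, f a) (b, f b) (c, f c) = between_graphs a b f (\<lambda>t. f a + k * (t - a))"
proof -
  have fb: "f b = f a + k * (b - a)" using slope by simp
  have cross: "cross2 ((b, f b) - (a, f a)) (z - (a, f a)) = (b - a) * (snd z - (f a + k * (fst z - a)))" for z
    by (simp add: cross2_def fb algebra_simps)
  have "f c < f a + k * (c - a)" using ab slope by (intro graph_below_chord) auto
  then have "0 < cross2 ((b, f b) - (a, f a)) (z - (a, f a)) * cross2 ((b, f b) - (a, f a)) ((c, f c) - (a, f a))
      \<longleftrightarrow> snd z < f a + k * (fst z - a)" for z
    unfolding cross using ab by (auto simp: zero_less_mult_iff mult_less_0_iff)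
  then have "cap_region D (a, f a) (b, f b) (c, f c) = {z \<in> D. snd z < f a + k * (fst z - a)}"
    unfolding cap_region_def by blast
  also have "\<dots> = between_graphs a b f (\<lambda>t. f a + k * (t - a))"
    using D_below_chord_subset_between_graphs[OF _ _ _ slope] between_graph_and_chord_subset_D[OF _ _ _ slope] ab
    by (fastforce simp: between_graphs_def)
  finally show ?thesis .
qed

lemma cap_area_law:
  assumes C: "condition_C X D"
    and ab: "-\<epsilon> < a" "a < c" "c < b" "b < \<epsilon>" and slope: "f b - f a = f1 c * (b - a)"
  shows "integral {a..b} (\<lambda>t. f a + f1 c * (t - a) - f t) = 2/3 * (b - a) * (f a + f1 c * (c - a) - f c)"
proof -
  let ?line = "\<lambda>t. f a + f1 c * (t - a)"
  have "measure lebesgue (cap_region D (a, f a) (b, f b) (c, f c)) =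
      4/3 * triangle_area (a, f a) (b, f b) (c, f c)"
  proof (rule C[unfolded condition_C_def, rule_format], intro conjI)
    show "(c, f c) \<in> X" "(a, f a) \<in> X" "(b, f b) \<in> X" using ab by (auto intro: graph_in_X)
    show "tangent_direction X (c, f c) (1, f1 c)" using ab by (auto intro: tangent_direction_graph)
    show "(a, f a) \<noteq> (b, f b)" using ab by simp
    show "cross2 ((b, f b) - (a, f a)) (1, f1 c) = 0" using slope by (simp add: cross2_def)
  qed
  moreover have "measure lebesgue (cap_region D (a, f a) (b, f b) (c, f c)) =
      integral {a..b} (\<lambda>t. ?line t - f t)"
    unfolding cap_region_eq_between_graphs[OF ab slope]
  proof (rule measure_between_graphs)
    show "continuous_on {a..b} f" using ab by (auto intro: continuous_on_subset[OF continuous_on_f])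
    show "f t \<le> ?line t" if "t \<in> {a..b}" for t
      using graph_below_chord[OF _ _ _ _ slope, of t] that ab slope by (cases "t = a \<or> t = b") auto
  qed (use ab in \<open>auto intro!: continuous_intros\<close>)
  moreover have "triangle_area (a, f a) (b, f b) (c, f c) = (b - a) * (?line c - f c) / 2"
  proof -
    have fb: "f b = f a + f1 c * (b - a)" using slope by simp
    have "cross2 ((b, f b) - (a, f a)) ((c, f c) - (a, f a)) = - ((b - a) * (?line c - f c))"
      by (simp add: cross2_def fb algebra_simps)
    moreover have "0 < (b - a) * (?line c - f c)"
      using ab slope graph_below_chord[of a c b] by simp
    ultimately show ?thesis by (simp add: triangle_area_def)
  qed
  ultimately show ?thesis by simp
qed

lemma chord_width_curvature:
  assumes C: "condition_C X D" and pos: "\<And>t. t \<in> {-\<epsilon><..<\<epsilon>} \<Longrightarrow> 0 < f2 t"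
    and ab: "-\<epsilon> < a0" "a0 < c" "c < b0" "b0 < \<epsilon>" and slope: "f b0 - f a0 = f1 c * (b0 - a0)"
  shows "(b0 - a0)\<^sup>2 * f2 c = 8 * (f a0 - f c - f1 c * (a0 - c))"
proof -
  define \<phi> where "\<phi> t = f t - f c - f1 c * (t - c)" for t
  have interval: "t \<in> {-\<epsilon><..<\<epsilon>}" if "t \<in> {a0..b0}" for t using that ab by auto
  interpret archimedes_valley \<phi> "\<lambda>t. f1 t - f1 c" f2 a0 c b0
  proof
    fix t assume "t \<in> {a0..b0}"
    then show "(\<phi> has_real_derivative f1 t - f1 c) (at t)"
      "((\<lambda>t. f1 t - f1 c) has_real_derivative f2 t) (at t)" "0 < f2 t"
      unfolding \<phi>_def using deriv[OF interval] pos[OF interval] by (auto intro!: derivative_eq_intros)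
  next
    fix a b assume "a0 \<le> a" "a < c" "c < b" "b \<le> b0" "\<phi> a = \<phi> b"
    then show "integral {a..b} (\<lambda>t. \<phi> a - \<phi> t) = 2/3 * (b - a) * \<phi> a"
      using cap_area_law[OF C, of a c b] ab by (simp add: \<phi>_def algebra_simps)
  qed (use ab slope in \<open>auto simp: \<phi>_def algebra_simps\<close>)
  have "isCont f2 c" using deriv[OF interval, of c] ab by (auto intro: DERIV_isCont)
  then show ?thesis unfolding \<phi>_def[symmetric] by (rule width_sq_curvature_eq)
qed

lemma integral_eq_trapezoid_minus_cap:
  assumes C: "condition_C X D"
    and ab: "-\<epsilon> < a" "a < c" "c < b" "b < \<epsilon>" and slope: "f b - f a = f1 c * (b - a)"
  shows "integral {a..b} f = (b - a) * (f a + f b) / 2 - 2/3 * (b - a) * (f a + f1 c * (c - a) - f c)"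
proof -
  let ?line = "\<lambda>t. f a + f1 c * (t - a)"
  have "(?line has_integral (b - a) * (f a + f b) / 2) {a..b}"
  proof -
    have fb: "f b = f a + f1 c * (b - a)" using slope by simp
    have "(?line has_integral (f a * b + f1 c * (b - a)\<^sup>2 / 2) - (f a * a + f1 c * (a - a)\<^sup>2 / 2)) {a..b}"
      using ab by (intro fundamental_theorem_of_calculus)
        (auto intro!: derivative_eq_intros simp: has_real_derivative_iff_has_vector_derivative[symmetric])
    moreover have "(f a * b + f1 c * (b - a)\<^sup>2 / 2) - (f a * a + f1 c * (a - a)\<^sup>2 / 2) = (b - a) * (f a + f b) / 2"
      unfolding fb by (simp add: power2_eq_square field_simps)
    ultimately show ?thesis by metis
  qed
  moreover have "f integrable_on {a..b}"
    using ab by (intro integrable_continuous_interval continuous_on_subset[OF continuous_on_f]) auto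
  ultimately have "integral {a..b} (\<lambda>t. ?line t - f t) = (b - a) * (f a + f b) / 2 - integral {a..b} f"
    by (intro integral_unique has_integral_diff integrable_integral)
  then show ?thesis using cap_area_law[OF C ab slope] by linarith
qed

lemma origin_chord_identities:
  assumes C: "condition_C X D" and pos: "\<And>t. t \<in> {-\<epsilon><..<\<epsilon>} \<Longrightarrow> 0 < f2 t" and f0: "f 0 = 0"
    and x: "\<bar>x\<bar> < \<epsilon>" "x \<noteq> 0" and u: "min 0 x < u" "u < max 0 x" and tangent: "x * f1 u = f x"
  shows "x ^ 3 * f2 u = 8 * (f x * u - x * f u) \<and>
    x * f x = 4/3 * (f x * u - x * f u) + 2 * (LBINT t=ereal 0..ereal x. f t)"
proof -
  define a0 b0 where "a0 = min 0 x" and "b0 = max 0 x"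
  define h where "h = f1 u * u - f u"
  have ab: "-\<epsilon> < a0" "a0 < u" "u < b0" "b0 < \<epsilon>" using u x by (auto simp: a0_def b0_def)
  have ends: "f a0 = f1 u * a0" "f b0 = f1 u * b0"
    using f0 tangent by (auto simp: a0_def b0_def min_def max_def mult.commute)
  then have slope: "f b0 - f a0 = f1 u * (b0 - a0)" by (simp add: algebra_simps)
  have "(b0 - a0)\<^sup>2 * f2 u = 8 * (f a0 - f u - f1 u * (a0 - u))"
    by (rule chord_width_curvature[OF C pos ab slope])
  moreover have "(b0 - a0)\<^sup>2 = x\<^sup>2" by (auto simp: a0_def b0_def min_def max_def)
  moreover have "f a0 - f u - f1 u * (a0 - u) = h" using ends by (simp add: h_def algebra_simps)
  ultimately have width: "x\<^sup>2 * f2 u = 8 * h" by simp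
  have "integral {a0..b0} f = (b0 - a0) * (f a0 + f b0) / 2 - 2/3 * (b0 - a0) * (f a0 + f1 u * (u - a0) - f u)"
    by (rule integral_eq_trapezoid_minus_cap[OF C ab slope])
  moreover have "b0 - a0 = \<bar>x\<bar>" by (auto simp: a0_def b0_def)
  moreover have "f a0 + f b0 = f x" using f0 by (auto simp: a0_def b0_def min_def max_def)
  moreover have "f a0 + f1 u * (u - a0) - f u = h" using ends by (simp add: h_def algebra_simps)
  ultimately have area: "integral {a0..b0} f = \<bar>x\<bar> * f x / 2 - 2/3 * \<bar>x\<bar> * h"
    by (simp only:)
  have "continuous_on {a0..b0} f"
    using ab by (intro continuous_on_subset[OF continuous_on_f]) auto
  then have "(LBINT t=ereal 0..ereal x. f t) = x * f x / 2 - 2/3 * x * h"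
    using interval_integral_eq_signed_integral[of 0 x f] area x(2)
    by (auto simp: a0_def b0_def min_def max_def)
  moreover have "f x * u - x * f u = x * h"
    by (simp add: h_def algebra_simps tangent[symmetric])
  moreover have "x ^ 3 * f2 u = x * (x\<^sup>2 * f2 u)" by (simp add: power2_eq_square power3_eq_cube)
  ultimately show ?thesis using width by simp
qed

end

lemma openin_graph_restrict:
  fixes f :: "real \<Rightarrow> real"
  assumes graph: "X \<inter> ball (0, 0) r = {(t, f t) | t. t \<in> {-\<delta><..<\<delta>}} \<inter> ball (0, 0) r"
    and sub: "{-\<epsilon><..<\<epsilon>} \<subseteq> {-\<delta><..<\<delta>}" and small: "\<And>t. t \<in> {-\<epsilon><..<\<epsilon>} \<Longrightarrow> (t, f t) \<in> ball (0, 0) r"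
  shows "openin (top_of_set X) ((\<lambda>t. (t, f t)) ` {-\<epsilon><..<\<epsilon>})"
proof -
  have "(\<lambda>t. (t, f t)) ` {-\<epsilon><..<\<epsilon>} = X \<inter> (ball (0, 0) r \<inter> {p. -\<epsilon> < fst p \<and> fst p < \<epsilon>})"
  proof (intro equalityI subsetI)
    fix p assume "p \<in> (\<lambda>t. (t, f t)) ` {-\<epsilon><..<\<epsilon>}"
    then obtain t where t: "t \<in> {-\<epsilon><..<\<epsilon>}" "p = (t, f t)" by auto
    then have "p \<in> {(t, f t) | t. t \<in> {-\<delta><..<\<delta>}} \<inter> ball (0, 0) r"
      using sub small by blast
    then have "p \<in> X \<inter> ball (0, 0) r" by (simp only: graph)
    then show "p \<in> X \<inter> (ball (0, 0) r \<inter> {p. -\<epsilon> < fst p \<and> fst p < \<epsilon>})"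
      using t by simp
  next
    fix p assume p: "p \<in> X \<inter> (ball (0, 0) r \<inter> {p. -\<epsilon> < fst p \<and> fst p < \<epsilon>})"
    then have "p \<in> {(t, f t) | t. t \<in> {-\<delta><..<\<delta>}}" using graph by blast
    then obtain t where "p = (t, f t)" by blast
    then show "p \<in> (\<lambda>t. (t, f t)) ` {-\<epsilon><..<\<epsilon>}" using p by auto
  qed
  moreover have "open (ball (0, 0) r \<inter> {p :: real \<times> real. -\<epsilon> < fst p \<and> fst p < \<epsilon>})"
    by (intro open_Int open_ball open_Collect_conj open_Collect_less continuous_intros)
  ultimately show ?thesis
    unfolding openin_open by blast
qed

lemma convex_graph_chart_exists:
  fixes X D :: "(real \<times> real) set" and f f1 f2 f3 :: "real \<Rightarrow> real"
  assumes curve: "strictly_convex_curve X D" and "0 < \<delta>"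
    and deriv: "\<forall>t\<in>{-\<delta><..<\<delta>}. (f has_real_derivative f1 t) (at t) \<and>
      (f1 has_real_derivative f2 t) (at t) \<and> (f2 has_real_derivative f3 t) (at t)"
    and f3: "continuous_on {-\<delta><..<\<delta>} f3" and convex: "strictly_convex_fun_on {-\<delta><..<\<delta>} f"
    and "f 0 = 0" "0 < f2 0"
    and "0 < r" and graph: "X \<inter> ball (0, 0) r = {(t, f t) | t. t \<in> {-\<delta><..<\<delta>}} \<inter> ball (0, 0) r"
  obtains \<epsilon> where "0 < \<epsilon>" "convex_graph_chart X D f f1 f2 f3 \<epsilon>" "\<And>t. t \<in> {-\<epsilon><..<\<epsilon>} \<Longrightarrow> 0 < f2 t"
proof -
  have "0 \<in> {-\<delta><..<\<delta>}" using \<open>0 < \<delta>\<close> by simp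
  then have "isCont f 0" "isCont f2 0" using deriv by (auto intro: DERIV_isCont)
  then have "(f \<longlongrightarrow> f 0) (nhds 0)" "(f2 \<longlongrightarrow> f2 0) (nhds 0)"
    by (simp_all add: isCont_def tendsto_at_iff_tendsto_nhds)
  then have "\<forall>\<^sub>F t in nhds 0. dist (f t) (f 0) < r / 2" "\<forall>\<^sub>F t in nhds 0. 0 < f2 t"
    using \<open>0 < r\<close> \<open>0 < f2 0\<close> by (intro tendstoD order_tendstoD(1); simp)+
  moreover have "\<forall>\<^sub>F t in nhds 0. t \<in> {-\<delta><..<\<delta>}"
    using \<open>0 \<in> {-\<delta><..<\<delta>}\<close> by (intro eventually_nhds_in_open) auto
  ultimately have "\<forall>\<^sub>F t in nhds 0. \<bar>f t\<bar> < r / 2 \<and> 0 < f2 t \<and> t \<in> {-\<delta><..<\<delta>}"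
    by eventually_elim (simp add: dist_real_def \<open>f 0 = 0\<close>)
  then obtain e where e: "0 < e" "\<And>t. \<bar>t\<bar> < e \<Longrightarrow> \<bar>f t\<bar> < r / 2 \<and> 0 < f2 t \<and> t \<in> {-\<delta><..<\<delta>}"
    unfolding eventually_nhds_metric dist_real_def by auto
  define \<epsilon> where "\<epsilon> = min e (r / 2)"
  have small: "\<bar>t\<bar> < e" "\<bar>t\<bar> < r / 2" if "t \<in> {-\<epsilon><..<\<epsilon>}" for t
    using that by (auto simp: \<epsilon>_def)
  have sub: "{-\<epsilon><..<\<epsilon>} \<subseteq> {-\<delta><..<\<delta>}" using e(2) small(1) by auto
  have "(t, f t) \<in> ball (0, 0) r" if "t \<in> {-\<epsilon><..<\<epsilon>}" for t
    using norm_Pair_le[of t "f t"] small[OF that] e(2)[OF small(1)[OF that]]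
    by (simp add: dist_norm norm_Pair)
  with graph sub have "openin (top_of_set X) ((\<lambda>t. (t, f t)) ` {-\<epsilon><..<\<epsilon>})"
    by (rule openin_graph_restrict)
  then have "convex_graph_chart X D f f1 f2 f3 \<epsilon>"
  proof unfold_locales
    show "open D" "convex D" "X = frontier D"
      using curve unfolding strictly_convex_curve_def by auto
    show "continuous_on {-\<epsilon><..<\<epsilon>} f3" by (rule continuous_on_subset[OF f3 sub])
    show "strictly_convex_fun_on {-\<epsilon><..<\<epsilon>} f"
      using convex sub unfolding strictly_convex_fun_on_def by blast
  qed (use deriv sub in blast)
  moreover have "0 < f2 t" if "t \<in> {-\<epsilon><..<\<epsilon>}" for t
    using e(2) small(1)[OF that] by blast
  moreover have "0 < \<epsilon>" using e(1) \<open>0 < r\<close> by (simp add: \<epsilon>_def)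
  ultimately show ?thesis using that by blast
qed

theorem lemma7:
  fixes X D :: "(real \<times> real) set" and f f1 f2 f3 :: "real \<Rightarrow> real" and \<delta> :: real
  assumes "strictly_convex_curve X D"
    and "condition_C X D"
    and "\<delta> > 0"
    and "\<forall>t\<in>{-\<delta><..<\<delta>}. (f has_real_derivative f1 t) (at t) \<and>
            (f1 has_real_derivative f2 t) (at t) \<and> (f2 has_real_derivative f3 t) (at t)"
    and "continuous_on {-\<delta><..<\<delta>} f3"
    and "\<forall>t\<in>{-\<delta><..<\<delta>}. f t \<ge> 0"
    and "strictly_convex_fun_on {-\<delta><..<\<delta>} f"
    and "f 0 = 0" and "f1 0 = 0" and "f2 0 > 0"
    and "(0, 0) \<in> X"
    and "\<exists>r>0. X \<inter> ball (0, 0) r = {(t, f t) | t. t \<in> {-\<delta><..<\<delta>}} \<inter> ball (0, 0) r"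
  shows "\<exists>\<epsilon>>0. \<forall>x u. \<bar>x\<bar> < \<epsilon> \<and>
           (if x = 0 then u = 0 else (min 0 x < u \<and> u < max 0 x \<and> x * f1 u = f x)) \<longrightarrow>
           x ^ 3 * f2 u = 8 * (f x * u - x * f u) \<and>
           x * f x = 4/3 * (f x * u - x * f u) + 2 * (LBINT t=ereal 0..ereal x. f t)"
proof -
  obtain r where "0 < r" and graph: "X \<inter> ball (0, 0) r = {(t, f t) | t. t \<in> {-\<delta><..<\<delta>}} \<inter> ball (0, 0) r"
    using assms(12) by blast
  obtain \<epsilon> where "0 < \<epsilon>" and chart: "convex_graph_chart X D f f1 f2 f3 \<epsilon>"
    and pos: "\<And>t. t \<in> {-\<epsilon><..<\<epsilon>} \<Longrightarrow> 0 < f2 t"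
    using convex_graph_chart_exists[OF assms(1,3,4,5,7,8,10) \<open>0 < r\<close> graph] by blast
  show ?thesis
  proof (rule exI[of _ \<epsilon>], rule conjI[OF \<open>0 < \<epsilon>\<close>], intro allI impI)
    fix x u
    assume xu: "\<bar>x\<bar> < \<epsilon> \<and> (if x = 0 then u = 0 else (min 0 x < u \<and> u < max 0 x \<and> x * f1 u = f x))"
    show "x ^ 3 * f2 u = 8 * (f x * u - x * f u) \<and>
        x * f x = 4/3 * (f x * u - x * f u) + 2 * (LBINT t=ereal 0..ereal x. f t)"
    proof (cases "x = 0")
      case True
      then show ?thesis using xu \<open>f 0 = 0\<close> by simp
    next
      case False
      then show ?thesis
        using xu convex_graph_chart.origin_chord_identities[OF chart assms(2) pos \<open>f 0 = 0\<close>] by auto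
    qed
  qed
qed

end
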